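(* Let $r \geq 2$, let $H$ be a digraph (possibly with loops), and let $D$ be an $H$-colored $r$-quasi-transitive digraph such that every directed cycle of length $r+1$ in $D$ is an $H$-cycle. Let $u,v\in V(D)$. If $d_{D}(u,v) \geq r$ and $T$ is a shortest directed $uv$-path in $D$, then $T$ is an $H$-path.
   Context: All digraphs are finite. A digraph $D$ is $r$-quasi-transitive if for all distinct $u,v\in V(D)$, whenever there is a directed $uv$-path of length $r$, $u$ and $v$ are joined by an arc (in some direction). $d_D(u,v)$ is the length of a shortest directed $uv$-path (here it is assumed a $uv$-path exists). $D$ has no loops and comes with a map $\rho: A(D)\to V(H)$. For a walk $W=(x_0,\ldots,x_n)$ in $D$, there is an obstruction on $x_i$ if $(\rho(x_{i-1},x_i),\rho(x_i,x_{i+1})) \notin A(H)$; for an open walk this is considered at internal vertices $x_i$, $1\le i\le n-1$, for a closed walk at all $i\in\{0,\ldots,n-1\}$ with indices modulo $n$. An $H$-path is a directed path with no obstructions (the colours of consecutive arcs form a directed walk in $H$); an $H$-cycle is a directed cycle with no obstructions, taken cyclically. *)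

theory Defs
  imports Main
begin

text \<open>A finite digraph D is given by a vertex set V and an arc set A \<subseteq> V \<times> V.
  Walks/paths are vertex lists; the length of a walk xs is length xs - 1.\<close>

definition digraph :: "'v set \<Rightarrow> ('v \<times> 'v) set \<Rightarrow> bool" where
  "digraph V A \<longleftrightarrow> finite V \<and> A \<subseteq> V \<times> V"

definition loopless :: "('v \<times> 'v) set \<Rightarrow> bool" where
  "loopless A \<longleftrightarrow> (\<forall>x. (x, x) \<notin> A)"

definition dwalk :: "('v \<times> 'v) set \<Rightarrow> 'v list \<Rightarrow> bool" where
  "dwalk A xs \<longleftrightarrow> xs \<noteq> [] \<and> (\<forall>i. Suc i < length xs \<longrightarrow> (xs ! i, xs ! Suc i) \<in> A)"

definition dpath :: "('v \<times> 'v) set \<Rightarrow> 'v \<Rightarrow> 'v \<Rightarrow> 'v list \<Rightarrow> bool" where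
  "dpath A u v xs \<longleftrightarrow> dwalk A xs \<and> distinct xs \<and> hd xs = u \<and> last xs = v"

definition plen :: "'v list \<Rightarrow> nat" where
  "plen xs = length xs - 1"

text \<open>distance: length of a shortest directed u-v path (used when one exists)\<close>
definition ddist :: "('v \<times> 'v) set \<Rightarrow> 'v \<Rightarrow> 'v \<Rightarrow> nat" where
  "ddist A u v = (LEAST n. \<exists>xs. dpath A u v xs \<and> plen xs = n)"

definition shortest_dpath :: "('v \<times> 'v) set \<Rightarrow> 'v \<Rightarrow> 'v \<Rightarrow> 'v list \<Rightarrow> bool" where
  "shortest_dpath A u v xs \<longleftrightarrow> dpath A u v xs \<and> plen xs = ddist A u v"

definition r_quasi_transitive :: "nat \<Rightarrow> 'v set \<Rightarrow> ('v \<times> 'v) set \<Rightarrow> bool" where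
  "r_quasi_transitive r V A \<longleftrightarrow>
     (\<forall>u\<in>V. \<forall>v\<in>V. u \<noteq> v \<longrightarrow> (\<exists>xs. dpath A u v xs \<and> plen xs = r)
        \<longrightarrow> (u, v) \<in> A \<or> (v, u) \<in> A)"

definition H_colored :: "('v \<times> 'v) set \<Rightarrow> 'c set \<Rightarrow> ('c \<times> 'c) set \<Rightarrow> ('v \<times> 'v \<Rightarrow> 'c) \<Rightarrow> bool" where
  "H_colored A VH AH \<rho> \<longleftrightarrow> AH \<subseteq> VH \<times> VH \<and> (\<forall>a\<in>A. \<rho> a \<in> VH)"

definition dcycle :: "('v \<times> 'v) set \<Rightarrow> 'v list \<Rightarrow> bool" where
  "dcycle A xs \<longleftrightarrow> length xs \<ge> 2 \<and> distinct xs \<and>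
     (\<forall>i < length xs. (xs ! i, xs ! ((i + 1) mod length xs)) \<in> A)"

text \<open>no obstruction at any internal vertex of an open walk\<close>
definition no_obstr_open :: "('c \<times> 'c) set \<Rightarrow> ('v \<times> 'v \<Rightarrow> 'c) \<Rightarrow> 'v list \<Rightarrow> bool" where
  "no_obstr_open AH \<rho> xs \<longleftrightarrow>
     (\<forall>i. 1 \<le> i \<and> Suc i < length xs \<longrightarrow>
        (\<rho> (xs ! (i - 1), xs ! i), \<rho> (xs ! i, xs ! Suc i)) \<in> AH)"

definition no_obstr_closed :: "('c \<times> 'c) set \<Rightarrow> ('v \<times> 'v \<Rightarrow> 'c) \<Rightarrow> 'v list \<Rightarrow> bool" where
  "no_obstr_closed AH \<rho> xs \<longleftrightarrow>
     (let k = length xs in \<forall>i < k.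
        (\<rho> (xs ! ((i + k - 1) mod k), xs ! i), \<rho> (xs ! i, xs ! ((i + 1) mod k))) \<in> AH)"

definition H_path :: "('v \<times> 'v) set \<Rightarrow> ('c \<times> 'c) set \<Rightarrow> ('v \<times> 'v \<Rightarrow> 'c) \<Rightarrow> 'v \<Rightarrow> 'v \<Rightarrow> 'v list \<Rightarrow> bool" where
  "H_path A AH \<rho> u v xs \<longleftrightarrow> dpath A u v xs \<and> no_obstr_open AH \<rho> xs"

definition H_cycle :: "('v \<times> 'v) set \<Rightarrow> ('c \<times> 'c) set \<Rightarrow> ('v \<times> 'v \<Rightarrow> 'c) \<Rightarrow> 'v list \<Rightarrow> bool" where
  "H_cycle A AH \<rho> xs \<longleftrightarrow> dcycle A xs \<and> no_obstr_closed AH \<rho> xs"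

end

theory Submission
  imports Defs
begin

(* Let T = x_0 ... x_n be a shortest uv-path, n >= r. Every window x_j ... x_{j+r} is a path
   of length r, so x_j and x_{j+r} are adjacent; as r >= 2, an arc x_j -> x_{j+r} would shorten T,
   so the arc is x_{j+r} -> x_j and closes the window into a directed cycle of length r + 1.
   That cycle is an H-cycle, so no vertex internal to the window is an obstruction, and since
   n >= r every internal vertex of T is internal to some window. *)

lemma dwalk_take: "dwalk A xs \<Longrightarrow> 0 < k \<Longrightarrow> dwalk A (take k xs)"
  unfolding dwalk_def by (auto simp: min_def)

lemma dwalk_drop: "dwalk A xs \<Longrightarrow> k < length xs \<Longrightarrow> dwalk A (drop k xs)"
  unfolding dwalk_def by auto

lemma dwalk_append:
  assumes "dwalk A xs" "dwalk A ys" "(last xs, hd ys) \<in> A"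
  shows "dwalk A (xs @ ys)"
  unfolding dwalk_def
proof (intro conjI allI impI)
  show "xs @ ys \<noteq> []" using assms(1) by (simp add: dwalk_def)
  fix i assume i: "Suc i < length (xs @ ys)"
  consider "Suc i < length xs" | "Suc i = length xs" | "length xs \<le> i" by linarith
  then show "((xs @ ys) ! i, (xs @ ys) ! Suc i) \<in> A"
  proof cases
    case 1
    then show ?thesis using assms(1) by (simp add: dwalk_def nth_append)
  next
    case 2
    then have "xs ! i = last xs" by (metis diff_Suc_1 last_conv_nth list.size(3) nat.distinct(1))
    moreover have "ys ! 0 = hd ys" using assms(2) by (simp add: dwalk_def hd_conv_nth)
    ultimately show ?thesis using 2 assms(3) by (simp add: nth_append)
  next
    case 3
    then obtain m where m: "i = length xs + m" using le_Suc_ex by blast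
    with i have "Suc m < length ys" by simp
    then show ?thesis using assms(2) m by (simp add: dwalk_def nth_append)
  qed
qed

lemma dwalk_set_subset:
  assumes "dwalk A xs" "A \<subseteq> V \<times> V" "2 \<le> length xs"
  shows "set xs \<subseteq> V"
proof
  fix x assume "x \<in> set xs"
  then obtain i where i: "i < length xs" "x = xs ! i" by (auto simp: in_set_conv_nth)
  show "x \<in> V"
  proof (cases "Suc i < length xs")
    case True
    then show ?thesis using assms(1,2) i by (auto simp: dwalk_def)
  next
    case False
    with i assms(3) obtain m where "i = Suc m" "Suc m < length xs" by (cases i) auto
    then show ?thesis using assms(1,2) i by (auto simp: dwalk_def)
  qed
qed

lemma ddist_le_plen: "dpath A u v xs \<Longrightarrow> ddist A u v \<le> plen xs"
  unfolding ddist_def by (auto intro: Least_le)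

lemma dpath_window:
  assumes "dpath A u v xs" "j + r < length xs"
  shows "dpath A (xs ! j) (xs ! (j + r)) (take (Suc r) (drop j xs))"
proof -
  have "last (take (Suc r) (drop j xs)) = xs ! (j + r)"
    using assms(2) by (simp add: take_Suc_conv_app_nth)
  then show ?thesis
    using assms by (auto simp: dpath_def hd_drop_conv_nth intro!: dwalk_take dwalk_drop)
qed

lemma dpath_shortcut:
  assumes "dpath A u v xs" "i < k" "k < length xs" "(xs ! i, xs ! k) \<in> A"
  shows "dpath A u v (take (Suc i) xs @ drop k xs)"
    and "plen (take (Suc i) xs @ drop k xs) = plen xs + Suc i - k"
proof -
  have "dwalk A (take (Suc i) xs @ drop k xs)"
    using assms by (intro dwalk_append dwalk_take dwalk_drop)
      (auto simp: dpath_def take_Suc_conv_app_nth hd_drop_conv_nth)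
  moreover have "distinct (take (Suc i) xs @ drop k xs)"
    using assms(1,2) by (simp add: dpath_def set_take_disj_set_drop_if_distinct)
  ultimately show "dpath A u v (take (Suc i) xs @ drop k xs)"
    using assms(1,3) by (cases xs) (auto simp: dpath_def)
  show "plen (take (Suc i) xs @ drop k xs) = plen xs + Suc i - k"
    using assms(2,3) by (simp add: plen_def)
qed

lemma shortest_dpath_no_forward_chord:
  assumes "shortest_dpath A u v xs" "Suc i < k" "k < length xs"
  shows "(xs ! i, xs ! k) \<notin> A"
proof
  assume "(xs ! i, xs ! k) \<in> A"
  with assms have "ddist A u v \<le> plen xs + Suc i - k"
    by (metis Suc_lessD dpath_shortcut ddist_le_plen shortest_dpath_def)
  moreover have "plen xs = ddist A u v" using assms(1) by (simp add: shortest_dpath_def)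
  ultimately show False using assms(2,3) unfolding plen_def by linarith
qed

lemma shortest_dpath_back_arc:
  assumes "r_quasi_transitive r V A" "A \<subseteq> V \<times> V" "2 \<le> r"
    and "shortest_dpath A u v xs" "j + r < length xs"
  shows "(xs ! (j + r), xs ! j) \<in> A"
proof -
  let ?W = "take (Suc r) (drop j xs)"
  have W: "dpath A (xs ! j) (xs ! (j + r)) ?W"
    using assms(4,5) by (auto simp: shortest_dpath_def intro: dpath_window)
  have "set ?W \<subseteq> V"
    using W assms(2,3,5) by (intro dwalk_set_subset) (auto simp: dpath_def)
  moreover have "xs ! j \<in> set ?W" "xs ! (j + r) \<in> set ?W"
    using W unfolding dpath_def dwalk_def by (metis hd_in_set last_in_set)+
  ultimately have "xs ! j \<in> V" "xs ! (j + r) \<in> V" by auto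
  moreover have "plen ?W = r" using assms(5) by (simp add: plen_def)
  moreover have "xs ! j \<noteq> xs ! (j + r)"
    using assms(3,4,5) by (simp add: shortest_dpath_def dpath_def nth_eq_iff_index_eq)
  ultimately have "(xs ! j, xs ! (j + r)) \<in> A \<or> (xs ! (j + r), xs ! j) \<in> A"
    using assms(1) W unfolding r_quasi_transitive_def by blast
  then show ?thesis
    using shortest_dpath_no_forward_chord[OF assms(4), of j "j + r"] assms(3,5) by auto
qed

lemma dcycle_if_closing_arc:
  assumes "dpath A x y xs" "2 \<le> length xs" "(y, x) \<in> A"
  shows "dcycle A xs"
  unfolding dcycle_def
proof (intro conjI allI impI)
  show "2 \<le> length xs" "distinct xs" using assms(1,2) by (auto simp: dpath_def)
  fix i assume i: "i < length xs"
  show "(xs ! i, xs ! ((i + 1) mod length xs)) \<in> A"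
  proof (cases "Suc i < length xs")
    case True
    then show ?thesis using assms(1) by (simp add: dpath_def dwalk_def)
  next
    case False
    with i have "Suc i = length xs" by simp
    then have "xs ! i = last xs" "(i + 1) mod length xs = 0"
      by (metis diff_Suc_1 last_conv_nth list.size(3) nat.distinct(1), simp)
    moreover have "xs ! 0 = hd xs" using assms(2) by (cases xs) auto
    ultimately show ?thesis using assms(1,3) by (simp add: dpath_def)
  qed
qed

lemma no_obstr_open_if_closed:
  assumes "no_obstr_closed AH \<rho> xs"
  shows "no_obstr_open AH \<rho> xs"
  unfolding no_obstr_open_def
proof (intro allI impI)
  fix i assume i: "1 \<le> i \<and> Suc i < length xs"
  then have "i + length xs - 1 = (i - 1) + length xs" by simp
  then have "(i + length xs - 1) mod length xs = (i - 1) mod length xs"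
    by (simp only: mod_add_self2)
  also have "\<dots> = i - 1" using i by (intro mod_less) linarith
  finally have "(i + length xs - 1) mod length xs = i - 1" .
  moreover have "(i + 1) mod length xs = Suc i" using i by simp
  ultimately show "(\<rho> (xs ! (i - 1), xs ! i), \<rho> (xs ! i, xs ! Suc i)) \<in> AH"
    using assms i unfolding no_obstr_closed_def Let_def by (metis Suc_lessD)
qed

lemma no_obstr_open_if_windows:
  assumes "2 \<le> r" "r < length xs"
    and windows: "\<And>j. j + r < length xs \<Longrightarrow> no_obstr_open AH \<rho> (take (Suc r) (drop j xs))"
  shows "no_obstr_open AH \<rho> xs"
  unfolding no_obstr_open_def
proof (intro allI impI)
  fix i assume i: "1 \<le> i \<and> Suc i < length xs"
  define j where "j = min (i - 1) (length xs - Suc r)"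
  define k where "k = i - j"
  have j: "j + r < length xs" "j < i" "i < j + r" using assms(1,2) i by (auto simp: j_def)
  then have k: "1 \<le> k" "Suc k < Suc r" "k - 1 = i - 1 - j" by (auto simp: k_def)
  define W where "W = take (Suc r) (drop j xs)"
  have W: "length W = Suc r" "\<And>m. m \<le> r \<Longrightarrow> W ! m = xs ! (j + m)"
    using j(1) by (simp_all add: W_def)
  have "(\<rho> (W ! (k - 1), W ! k), \<rho> (W ! k, W ! Suc k)) \<in> AH"
    using windows[OF j(1), folded W_def] k W(1) unfolding no_obstr_open_def by auto
  with j k W(2) show "(\<rho> (xs ! (i - 1), xs ! i), \<rho> (xs ! i, xs ! Suc i)) \<in> AH"
    by (simp add: k_def)
qed

theorem theorem21:
  fixes V :: "'v set" and A :: "('v \<times> 'v) set"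
    and VH :: "'c set" and AH :: "('c \<times> 'c) set" and \<rho> :: "'v \<times> 'v \<Rightarrow> 'c"
    and r :: nat and u v :: 'v and T :: "'v list"
  assumes "r \<ge> 2"
    and "digraph V A" and "loopless A"
    and "finite VH" and "H_colored A VH AH \<rho>"
    and "r_quasi_transitive r V A"
    and "\<forall>C. dcycle A C \<and> length C = r + 1 \<longrightarrow> H_cycle A AH \<rho> C"
    and "u \<in> V" and "v \<in> V"
    and "shortest_dpath A u v T"
    and "ddist A u v \<ge> r"
  shows "H_path A AH \<rho> u v T"
proof -
  have AV: "A \<subseteq> V \<times> V" using assms(2) by (simp add: digraph_def)
  have T: "dpath A u v T" "r < length T"
    using assms(1,10,11) unfolding shortest_dpath_def plen_def by auto
  have "no_obstr_open AH \<rho> (take (Suc r) (drop j T))" if j: "j + r < length T" for j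
  proof -
    have "(T ! (j + r), T ! j) \<in> A"
      using shortest_dpath_back_arc[OF assms(6) AV assms(1,10) j] .
    moreover have "dpath A (T ! j) (T ! (j + r)) (take (Suc r) (drop j T))"
      using dpath_window[OF T(1) j] .
    ultimately have "dcycle A (take (Suc r) (drop j T))"
      using assms(1) j by (intro dcycle_if_closing_arc) auto
    then have "H_cycle A AH \<rho> (take (Suc r) (drop j T))" using assms(7) j by simp
    then show ?thesis by (simp add: H_cycle_def no_obstr_open_if_closed)
  qed
  then have "no_obstr_open AH \<rho> T" using no_obstr_open_if_windows assms(1) T(2) by blast
  with T(1) show ?thesis by (simp add: H_path_def)
qed

end
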